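(* Let $i\in\{1,2\}$ and let $\alpha_1,\dots,\alpha_N$ be $x_i$-curves in $\mathbb{R}^2$. Then there are $x_i$-curves $\beta_j=\gamma^i(f_j)$, $j=1,\dots,N$, such that $\alpha_1\cup\dots\cup\alpha_N=\beta_1\cup\dots\cup\beta_N$ and $f_{j-1}(t)\le f_j(t)$ for all $t\in\mathbb{R}$ and all $1<j\le N$. If the curves $\alpha_j$ are piecewise linear, then so are the curves $\beta_j$.
   Context: For a $1$-Lipschitz $f:\mathbb{R}\to\mathbb{R}$, the $x_1$-curve parametrized by $f$ is $\gamma^1(f)=\{(t,f(t)):t\in\mathbb{R}\}$ and the $x_2$-curve is $\gamma^2(f)=\{(f(t),t):t\in\mathbb{R}\}$. An $x_i$-curve is a set of this form; it is piecewise linear if its parametrization is. *)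

theory Defs
  imports "HOL-Analysis.Analysis"
begin

definition gamma :: "nat \<Rightarrow> (real \<Rightarrow> real) \<Rightarrow> (real \<times> real) set" where
  "gamma i f = (if i = 1 then {(t, f t) | t. True} else {(f t, t) | t. True})"

definition lip1 :: "(real \<Rightarrow> real) \<Rightarrow> bool" where
  "lip1 f \<longleftrightarrow> 1-lipschitz_on UNIV f"

definition piecewise_linear :: "(real \<Rightarrow> real) \<Rightarrow> bool" where
  "piecewise_linear f \<longleftrightarrow> (\<exists>S. finite S \<and>
     (\<forall>a b. {a<..<b} \<inter> S = {} \<longrightarrow> (\<exists>m c. \<forall>t\<in>{a..b}. f t = m * t + c)))"

definition is_curve :: "nat \<Rightarrow> (real \<times> real) set \<Rightarrow> bool" where
  "is_curve i A \<longleftrightarrow> (\<exists>f. lip1 f \<and> A = gamma i f)"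

definition is_pl_curve :: "nat \<Rightarrow> (real \<times> real) set \<Rightarrow> bool" where
  "is_pl_curve i A \<longleftrightarrow> (\<exists>f. lip1 f \<and> piecewise_linear f \<and> A = gamma i f)"

end

theory Submission
  imports Defs
begin

text \<open>Let \<open>g\<^sub>1, \<dots>, g\<^sub>N\<close> parametrize the given curves and let \<open>f\<^sub>j(t)\<close> be the \<open>j\<close>-th smallest of
  \<open>g\<^sub>1(t), \<dots>, g\<^sub>N(t)\<close>. At every \<open>t\<close> this merely reorders the values, so the union of the curves is
  unchanged and \<open>f\<^sub>1 \<le> \<dots> \<le> f\<^sub>N\<close>. Since the \<open>j\<close>-th smallest value is the minimum over all
  \<open>j\<close>-element index sets \<open>J\<close> of \<open>max\<^sub>k\<^sub>\<in>\<^sub>J g\<^sub>k(t)\<close>, each \<open>f\<^sub>j\<close> is obtained from the \<open>g\<^sub>k\<close> by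
  pointwise minima and maxima, and both 1-Lipschitz and piecewise linear functions are closed under
  these. For \<open>min f g\<close> of piecewise linear \<open>f, g\<close> the extra breakpoints are the zeros of \<open>f - g\<close>
  to whose right \<open>f - g\<close> does not vanish identically; there are finitely many, because two of them
  are always separated by a breakpoint of \<open>f\<close> or \<open>g\<close>.\<close>

lemma lip1_max:
  assumes "lip1 f" "lip1 g"
  shows "lip1 (\<lambda>t. max (f t) (g t))"
proof -
  have "\<bar>f x - f y\<bar> \<le> \<bar>x - y\<bar>" "\<bar>g x - g y\<bar> \<le> \<bar>x - y\<bar>" for x y
    using assms by (auto simp: lip1_def dist_real_def dest: lipschitz_onD)
  then show ?thesis
    unfolding lip1_def by (intro lipschitz_onI) (auto simp: dist_real_def max_def abs_le_iff, smt+)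
qed

lemma lip1_uminus: "lip1 (\<lambda>t. - f t) \<longleftrightarrow> lip1 f"
  by (simp add: lip1_def)

lemma lip1_min:
  assumes "lip1 f" "lip1 g"
  shows "lip1 (\<lambda>t. min (f t) (g t))"
proof -
  have "(\<lambda>t. min (f t) (g t)) = (\<lambda>t. - max (- f t) (- g t))"
    by (auto simp: fun_eq_iff min_def max_def)
  then show ?thesis using assms by (simp add: lip1_uminus lip1_max)
qed

definition affine_on :: "real set \<Rightarrow> (real \<Rightarrow> real) \<Rightarrow> bool" where
  "affine_on A f \<longleftrightarrow> (\<exists>m c. \<forall>t\<in>A. f t = m * t + c)"

lemma piecewise_linear_iff_affine_on:
  "piecewise_linear f \<longleftrightarrow> (\<exists>S. finite S \<and> (\<forall>a b. {a<..<b} \<inter> S = {} \<longrightarrow> affine_on {a..b} f))"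
  by (simp add: piecewise_linear_def affine_on_def)

lemma affine_on_diff:
  assumes "affine_on A f" "affine_on A g"
  shows "affine_on A (\<lambda>t. f t - g t)"
proof -
  obtain m c m' c' where "\<forall>t\<in>A. f t = m * t + c" "\<forall>t\<in>A. g t = m' * t + c'"
    using assms by (auto simp: affine_on_def)
  then have "\<forall>t\<in>A. f t - g t = (m - m') * t + (c - c')"
    by (simp add: algebra_simps)
  then show ?thesis unfolding affine_on_def by blast
qed

lemma affine_on_uminusI:
  assumes "affine_on A f"
  shows "affine_on A (\<lambda>t. - f t)"
proof -
  obtain m c where "\<forall>t\<in>A. f t = m * t + c" using assms by (auto simp: affine_on_def)
  then have "\<forall>t\<in>A. - f t = (- m) * t + (- c)" by simp
  then show ?thesis unfolding affine_on_def by blast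
qed

lemma affine_on_uminus: "affine_on A (\<lambda>t. - f t) \<longleftrightarrow> affine_on A f"
  using affine_on_uminusI[of A "\<lambda>t. - f t"] affine_on_uminusI[of A f] by auto

lemma affine_on_eqI: "affine_on A f \<Longrightarrow> (\<And>t. t \<in> A \<Longrightarrow> g t = f t) \<Longrightarrow> affine_on A g"
  by (simp add: affine_on_def)

lemma affine_on_nonpos:
  assumes "affine_on {a..b} D" "D a \<le> 0" "D b \<le> 0" "t \<in> {a..b}"
  shows "D t \<le> 0"
proof -
  obtain m c where D: "\<forall>t\<in>{a..b}. D t = m * t + c" using assms(1) by (auto simp: affine_on_def)
  have "a \<le> t" "t \<le> b" using assms(4) by auto
  then have "m * t \<le> max (m * a) (m * b)"
    by (cases "m \<ge> 0") (auto intro: mult_left_mono mult_left_mono_neg max.coboundedI1 max.coboundedI2)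
  then show ?thesis using D assms by auto
qed

definition nonflat_zeros :: "(real \<Rightarrow> real) \<Rightarrow> real set" where
  "nonflat_zeros D = {t. D t = 0 \<and> \<not> (\<forall>\<^sub>F s in at_right t. D s = 0)}"

lemma affine_on_sign_change:
  assumes "affine_on {a..b} D" "a \<le> b" "D a * D b < 0"
  obtains t where "t \<in> {a<..<b}" "t \<in> nonflat_zeros D"
proof -
  obtain m c where D: "\<forall>t\<in>{a..b}. D t = m * t + c" using assms(1) by (auto simp: affine_on_def)
  have "m \<noteq> 0" using D assms(2,3) by auto
  define t where "t = - c / m"
  have Dt: "D s = m * (s - t)" if "s \<in> {a..b}" for s
    using D that \<open>m \<noteq> 0\<close> by (simp add: t_def algebra_simps)
  have "m\<^sup>2 * ((a - t) * (b - t)) < 0"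
    using assms(2,3) Dt[of a] Dt[of b] by (simp add: power2_eq_square algebra_simps)
  then have "(a - t) * (b - t) < 0"
    by (simp add: mult_less_0_iff)
  with assms(2) have t: "t \<in> {a<..<b}"
    by (auto simp: mult_less_0_iff)
  have "\<not> (\<forall>\<^sub>F s in at_right t. D s = 0)"
  proof
    assume "\<forall>\<^sub>F s in at_right t. D s = 0"
    moreover have "\<forall>\<^sub>F s in at_right t. s \<in> {t<..<b}"
      using t by (intro eventually_at_right_real) auto
    ultimately obtain s where "D s = 0" "s \<in> {t<..<b}"
      using eventually_happens'[OF trivial_limit_at_right_real] eventually_conj by blast
    then show False using Dt[of s] t \<open>m \<noteq> 0\<close> by auto
  qed
  moreover have "D t = 0" using Dt[of t] t by simp
  ultimately show ?thesis using that t by (auto simp: nonflat_zeros_def)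
qed

lemma nonflat_zeros_separated:
  assumes "affine_on {x..y} D" "x \<in> nonflat_zeros D" "y \<in> nonflat_zeros D"
  shows "y \<le> x"
proof (rule ccontr)
  assume "\<not> y \<le> x"
  then have "D s = 0" if "s \<in> {x..y}" for s
    using affine_on_nonpos[OF assms(1), of s] affine_on_nonpos[of x y "\<lambda>t. - D t" s]
      assms that by (auto simp: nonflat_zeros_def affine_on_uminus)
  then have "\<forall>\<^sub>F s in at_right x. D s = 0"
    using \<open>\<not> y \<le> x\<close> by (intro eventually_at_rightI[of x y]) auto
  then show False using assms(2) by (simp add: nonflat_zeros_def)
qed

lemma finite_if_separated_by_finite:
  fixes C S :: "'a::linorder set"
  assumes "finite S" "\<And>x y. x \<in> C \<Longrightarrow> y \<in> C \<Longrightarrow> x < y \<Longrightarrow> \<exists>s\<in>S. x < s \<and> s < y"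
  shows "finite C"
proof -
  have not_less: "\<not> x < y"
    if "x \<in> C" "y \<in> C" and eq: "{s\<in>S. s < x} = {s\<in>S. s < y}" for x y
  proof
    assume "x < y"
    then obtain s where "s \<in> S" "x < s" "s < y"
      using assms(2) \<open>x \<in> C\<close> \<open>y \<in> C\<close> by blast
    then have "s < x" using eq by blast
    with \<open>x < s\<close> show False by (rule order.asym)
  qed
  have "inj_on (\<lambda>c. {s\<in>S. s < c}) C"
  proof (rule inj_onI)
    fix x y assume "x \<in> C" "y \<in> C" "{s\<in>S. s < x} = {s\<in>S. s < y}"
    then have "\<not> x < y" "\<not> y < x" using not_less by metis+
    then show "x = y" by (simp add: antisym_conv3)
  qed
  moreover have "(\<lambda>c. {s\<in>S. s < c}) ` C \<subseteq> Pow S" by blast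
  ultimately show ?thesis using assms(1) by (simp add: inj_on_finite)
qed

lemma affine_on_min:
  assumes "affine_on {a..b} f" "affine_on {a..b} g"
    and "{a<..<b} \<inter> nonflat_zeros (\<lambda>t. f t - g t) = {}"
  shows "affine_on {a..b} (\<lambda>t. min (f t) (g t))"
proof (cases "a \<le> b")
  case False
  then show ?thesis by (simp add: affine_on_def)
next
  case True
  define D where "D = (\<lambda>t. f t - g t)"
  have D: "affine_on {a..b} D" unfolding D_def using assms(1,2) by (rule affine_on_diff)
  consider "D a \<le> 0" "D b \<le> 0" | "D a \<ge> 0" "D b \<ge> 0" | "D a * D b < 0"
    using zero_le_mult_iff[of "D a" "D b"] by linarith
  then show ?thesis
  proof cases
    case 1
    then have "min (f t) (g t) = f t" if "t \<in> {a..b}" for t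
      using affine_on_nonpos[OF D _ _ that] by (simp add: D_def)
    then show ?thesis by (rule affine_on_eqI[OF assms(1)])
  next
    case 2
    then have "min (f t) (g t) = g t" if "t \<in> {a..b}" for t
      using affine_on_nonpos[OF affine_on_uminusI[OF D] _ _ that] by (simp add: D_def)
    then show ?thesis by (rule affine_on_eqI[OF assms(2)])
  next
    case 3
    then obtain t where "t \<in> {a<..<b}" "t \<in> nonflat_zeros D"
      using affine_on_sign_change[OF D True] by blast
    then show ?thesis using assms(3) unfolding D_def by blast
  qed
qed

lemma piecewise_linear_min:
  assumes "piecewise_linear f" "piecewise_linear g"
  shows "piecewise_linear (\<lambda>t. min (f t) (g t))"
proof -
  obtain Sf Sg where "finite Sf" "finite Sg"
    and Sf: "\<And>a b. {a<..<b} \<inter> Sf = {} \<Longrightarrow> affine_on {a..b} f"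
    and Sg: "\<And>a b. {a<..<b} \<inter> Sg = {} \<Longrightarrow> affine_on {a..b} g"
    using assms unfolding piecewise_linear_iff_affine_on by metis
  define S where "S = Sf \<union> Sg"
  define Z where "Z = nonflat_zeros (\<lambda>t. f t - g t)"
  have affine: "affine_on {a..b} f" "affine_on {a..b} g" if "{a<..<b} \<inter> S = {}" for a b
    using that Sf[of a b] Sg[of a b] unfolding S_def by blast+
  have "finite Z"
  proof (rule finite_if_separated_by_finite)
    show "finite S" using \<open>finite Sf\<close> \<open>finite Sg\<close> by (simp add: S_def)
    fix x y assume "x \<in> Z" "y \<in> Z" "x < y"
    then show "\<exists>s\<in>S. x < s \<and> s < y"
      using nonflat_zeros_separated[OF affine_on_diff[OF affine], of x y]
      unfolding Z_def by fastforce
  qed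
  have "finite (S \<union> Z)"
    using \<open>finite Sf\<close> \<open>finite Sg\<close> \<open>finite Z\<close> by (simp add: S_def)
  moreover have "affine_on {a..b} (\<lambda>t. min (f t) (g t))" if "{a<..<b} \<inter> (S \<union> Z) = {}" for a b
    using that affine[of a b] by (intro affine_on_min) (auto simp: Z_def)
  ultimately show ?thesis
    unfolding piecewise_linear_iff_affine_on by blast
qed

lemma piecewise_linear_uminus: "piecewise_linear (\<lambda>t. - f t) \<longleftrightarrow> piecewise_linear f"
  by (simp add: piecewise_linear_iff_affine_on affine_on_uminus)

lemma piecewise_linear_max:
  assumes "piecewise_linear f" "piecewise_linear g"
  shows "piecewise_linear (\<lambda>t. max (f t) (g t))"
proof -
  have "(\<lambda>t. max (f t) (g t)) = (\<lambda>t. - min (- f t) (- g t))"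
    by (auto simp: fun_eq_iff min_def max_def)
  then show ?thesis
    using assms by (simp add: piecewise_linear_uminus piecewise_linear_min)
qed

text \<open>The \<open>j\<close>-th smallest of \<open>v 1, \<dots>, v N\<close>, counted with multiplicity.\<close>

definition order_stat :: "(nat \<Rightarrow> 'a::linorder) \<Rightarrow> nat \<Rightarrow> nat \<Rightarrow> 'a" where
  "order_stat v N j = Min ((\<lambda>J. Max (v ` J)) ` {J. J \<subseteq> {1..N} \<and> card J = j})"

lemma finite_subsets_card: "finite A \<Longrightarrow> finite {J. J \<subseteq> A \<and> card J = j}"
  by (rule finite_subset[of _ "Pow A"]) auto

lemma order_stat_le_Max:
  assumes "J \<subseteq> {1..N}" "card J = j"
  shows "order_stat v N j \<le> Max (v ` J)"
  unfolding order_stat_def using assms by (intro Min_le finite_subsets_card) auto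

lemma order_stat_attained:
  assumes "j \<le> N"
  obtains J where "J \<subseteq> {1..N}" "card J = j" "order_stat v N j = Max (v ` J)"
proof -
  have "{1..j} \<in> {J. J \<subseteq> {1..N} \<and> card J = j}" using assms by simp
  then have "order_stat v N j \<in> (\<lambda>J. Max (v ` J)) ` {J. J \<subseteq> {1..N} \<and> card J = j}"
    unfolding order_stat_def by (intro Min_in finite_imageI finite_subsets_card) blast+
  then show ?thesis using that by blast
qed

lemma order_stat_mem:
  assumes "1 \<le> j" "j \<le> N"
  shows "order_stat v N j \<in> v ` {1..N}"
proof -
  obtain J where J: "J \<subseteq> {1..N}" "card J = j" "order_stat v N j = Max (v ` J)"
    using order_stat_attained[OF assms(2)] by blast
  then have "finite J" "J \<noteq> {}" using assms(1) finite_subset by fastforce+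
  then have "Max (v ` J) \<in> v ` J" by simp
  then show ?thesis using J by auto
qed

lemma order_stat_mono:
  assumes "1 \<le> i" "i \<le> j" "j \<le> N"
  shows "order_stat v N i \<le> order_stat v N j"
proof -
  obtain J where J: "J \<subseteq> {1..N}" "card J = j" "order_stat v N j = Max (v ` J)"
    using order_stat_attained[OF assms(3)] by blast
  obtain I where I: "I \<subseteq> J" "card I = i" "finite I"
    using obtain_subset_with_card_n[of i J] J(2) assms(2) by blast
  have "order_stat v N i \<le> Max (v ` I)"
    using I J by (intro order_stat_le_Max) auto
  also have "\<dots> \<le> Max (v ` J)"
    using I J assms(1) finite_subset[OF J(1)] by (intro Max_mono) auto
  finally show ?thesis using J(3) by simp
qed

lemma order_stat_surj:
  assumes "k \<in> {1..N}"
  shows "v k \<in> (\<lambda>j. order_stat v N j) ` {1..N}"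
proof -
  define L where "L = {l \<in> {1..N}. v l \<le> v k}"
  have "finite L" "k \<in> L" "L \<subseteq> {1..N}" using assms by (auto simp: L_def)
  then have j: "card L \<in> {1..N}"
    using card_mono[of "{1..N}" L] by (auto simp: Suc_le_eq card_gt_0_iff)
  have "order_stat v N (card L) \<le> Max (v ` L)"
    using \<open>L \<subseteq> {1..N}\<close> by (rule order_stat_le_Max) simp
  also have "\<dots> \<le> v k"
    using \<open>finite L\<close> \<open>k \<in> L\<close> by (intro Max.boundedI) (auto simp: L_def)
  finally have "order_stat v N (card L) \<le> v k" .
  \<comment> \<open>an index set of size \<open>card L\<close> cannot fit inside \<open>L - {k}\<close>\<close>
  moreover have "v k \<le> Max (v ` J)" if "J \<subseteq> {1..N}" "card J = card L" for J
  proof -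
    have "card (L - {k}) < card J"
      using that card_Diff1_less[OF \<open>finite L\<close> \<open>k \<in> L\<close>] by simp
    then have "\<not> J \<subseteq> L - {k}"
      using card_mono[of "L - {k}" J] \<open>finite L\<close> by auto
    then obtain l where "l \<in> J" "l \<notin> L - {k}" by blast
    then have "v k \<le> v l" using that by (auto simp: L_def)
    then show ?thesis
      using \<open>l \<in> J\<close> that finite_subset[OF that(1)] by (auto intro: Max_ge_iff[THEN iffD2])
  qed
  then have "v k \<le> order_stat v N (card L)"
    unfolding order_stat_def using j
    by (intro Min.boundedI finite_imageI finite_subsets_card) (auto intro: exI[of _ "{1..card L}"])
  ultimately show ?thesis using j by (intro image_eqI[of _ _ "card L"]) auto
qed

lemma order_stat_image: "(\<lambda>j. order_stat v N j) ` {1..N} = v ` {1..N}"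
proof -
  have "(\<lambda>j. order_stat v N j) ` {1..N} \<subseteq> v ` {1..N}"
  proof (rule image_subsetI)
    fix j assume "j \<in> {1..N}"
    then show "order_stat v N j \<in> v ` {1..N}" by (intro order_stat_mem) auto
  qed
  moreover have "v ` {1..N} \<subseteq> (\<lambda>j. order_stat v N j) ` {1..N}"
    by (rule image_subsetI) (rule order_stat_surj[where v = v])
  ultimately show ?thesis by (rule equalityI)
qed

lemma closed_pointwise_Min:
  assumes "finite I" "I \<noteq> {}" "\<And>i. i \<in> I \<Longrightarrow> P (h i)"
    and "\<And>f g. P f \<Longrightarrow> P g \<Longrightarrow> P (\<lambda>t. min (f t) (g t))"
  shows "P (\<lambda>t. Min ((\<lambda>i. h i t) ` I))"
  using assms(1-3)
proof (induction I rule: finite_ne_induct)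
  case (singleton i)
  then show ?case by (simp add: eta_contract_eq)
next
  case (insert i I)
  have "(\<lambda>t. Min ((\<lambda>i. h i t) ` insert i I)) = (\<lambda>t. min (h i t) (Min ((\<lambda>i. h i t) ` I)))"
    using insert.hyps by simp
  then show ?case using insert assms(4) by simp
qed

lemma closed_pointwise_Max:
  assumes "finite I" "I \<noteq> {}" "\<And>i. i \<in> I \<Longrightarrow> P (h i)"
    and "\<And>f g. P f \<Longrightarrow> P g \<Longrightarrow> P (\<lambda>t. max (f t) (g t))"
  shows "P (\<lambda>t. Max ((\<lambda>i. h i t) ` I))"
  using assms(1-3)
proof (induction I rule: finite_ne_induct)
  case (singleton i)
  then show ?case by (simp add: eta_contract_eq)
next
  case (insert i I)
  have "(\<lambda>t. Max ((\<lambda>i. h i t) ` insert i I)) = (\<lambda>t. max (h i t) (Max ((\<lambda>i. h i t) ` I)))"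
    using insert.hyps by simp
  then show ?case using insert assms(4) by simp
qed

lemma closed_order_stat:
  fixes g :: "nat \<Rightarrow> 'a \<Rightarrow> 'b::linorder"
  assumes "1 \<le> j" "j \<le> N" "\<And>k. k \<in> {1..N} \<Longrightarrow> P (g k)"
    and "\<And>f g. P f \<Longrightarrow> P g \<Longrightarrow> P (\<lambda>t. min (f t) (g t))"
    and "\<And>f g. P f \<Longrightarrow> P g \<Longrightarrow> P (\<lambda>t. max (f t) (g t))"
  shows "P (\<lambda>t. order_stat (\<lambda>k. g k t) N j)"
proof -
  define \<J> where "\<J> = {J. J \<subseteq> {1..N} \<and> card J = j}"
  have "finite \<J>" "\<J> \<noteq> {}"
    using assms(2) finite_subsets_card[of "{1..N}" j] by (auto simp: \<J>_def intro!: exI[of _ "{1..j}"])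
  moreover have "P (\<lambda>t. Max ((\<lambda>k. g k t) ` J))" if "J \<in> \<J>" for J
  proof (rule closed_pointwise_Max[where P = P])
    show "finite J" "J \<noteq> {}"
      using that assms(1) finite_subset[of J "{1..N}"] by (auto simp: \<J>_def)
  qed (use that assms(3,5) in \<open>auto simp: \<J>_def\<close>)
  ultimately have "P (\<lambda>t. Min ((\<lambda>J. Max ((\<lambda>k. g k t) ` J)) ` \<J>))"
    using assms(4) by (rule closed_pointwise_Min[where h = "\<lambda>J t. Max ((\<lambda>k. g k t) ` J)"])
  then show ?thesis by (simp add: order_stat_def \<J>_def)
qed

lemma gamma_inj: "gamma i f = gamma i g \<Longrightarrow> f = g"
  by (fastforce simp: gamma_def set_eq_iff fun_eq_iff split: if_splits)

lemma piecewise_linear_if_is_pl_curve: "is_pl_curve i (gamma i g) \<Longrightarrow> piecewise_linear g"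
  unfolding is_pl_curve_def by (metis gamma_inj)

lemma UN_gamma_cong:
  assumes "\<And>t. (\<lambda>k. f k t) ` A = (\<lambda>k. g k t) ` A"
  shows "(\<Union>k\<in>A. gamma i (f k)) = (\<Union>k\<in>A. gamma i (g k))"
proof -
  have "(\<Union>k\<in>A. gamma i (f k)) \<subseteq> (\<Union>k\<in>A. gamma i (g k))"
    if sub: "\<And>t. (\<lambda>k. f k t) ` A \<subseteq> (\<lambda>k. g k t) ` A" for f g
  proof
    fix x assume "x \<in> (\<Union>k\<in>A. gamma i (f k))"
    then obtain k t where "k \<in> A" "x = (if i = 1 then (t, f k t) else (f k t, t))"
      by (auto simp: gamma_def split: if_splits)
    moreover obtain l where "l \<in> A" "f k t = g l t" using sub \<open>k \<in> A\<close> by blast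
    ultimately show "x \<in> (\<Union>k\<in>A. gamma i (g k))" by (auto simp: gamma_def)
  qed
  then show ?thesis using assms by (simp add: subset_antisym)
qed

theorem lemma4p6:
  fixes i N :: nat and \<alpha> :: "nat \<Rightarrow> (real \<times> real) set"
  assumes "i \<in> {1, 2}"
    and "\<forall>j\<in>{1..N}. is_curve i (\<alpha> j)"
  shows "\<exists>f :: nat \<Rightarrow> real \<Rightarrow> real.
           (\<forall>j\<in>{1..N}. lip1 (f j))
         \<and> (\<Union>j\<in>{1..N}. \<alpha> j) = (\<Union>j\<in>{1..N}. gamma i (f j))
         \<and> (\<forall>j. 1 < j \<and> j \<le> N \<longrightarrow> (\<forall>t. f (j - 1) t \<le> f j t))
         \<and> ((\<forall>j\<in>{1..N}. is_pl_curve i (\<alpha> j)) \<longrightarrow> (\<forall>j\<in>{1..N}. piecewise_linear (f j)))"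
proof -
  \<comment> \<open>\<open>gamma\<close> reads every \<open>i \<noteq> 1\<close> as 2.\<close>
  have "\<forall>j\<in>{1..N}. \<exists>g. lip1 g \<and> \<alpha> j = gamma i g"
    using assms(2) unfolding is_curve_def by blast
  then obtain g where g: "\<forall>j\<in>{1..N}. lip1 (g j) \<and> \<alpha> j = gamma i (g j)"
    by (rule bchoice[elim_format]) blast
  define f where "f j t = order_stat (\<lambda>k. g k t) N j" for j t
  have closed: "P (f j)"
    if "j \<in> {1..N}" "\<And>k. k \<in> {1..N} \<Longrightarrow> P (g k)"
      and "\<And>f g. P f \<Longrightarrow> P g \<Longrightarrow> P (\<lambda>t. min (f t) (g t))"
      and "\<And>f g. P f \<Longrightarrow> P g \<Longrightarrow> P (\<lambda>t. max (f t) (g t))" for P j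
    unfolding f_def by (rule closed_order_stat[where P = P and g = g]) (use that in auto)
  have pl_g: "piecewise_linear (g k)"
    if "\<forall>j\<in>{1..N}. is_pl_curve i (\<alpha> j)" "k \<in> {1..N}" for k
    using that g by (intro piecewise_linear_if_is_pl_curve[of i]) auto
  have "(\<Union>j\<in>{1..N}. \<alpha> j) = (\<Union>j\<in>{1..N}. gamma i (g j))"
    using g by simp
  also have "\<dots> = (\<Union>j\<in>{1..N}. gamma i (f j))"
  proof (rule UN_gamma_cong)
    fix t
    show "(\<lambda>k. g k t) ` {1..N} = (\<lambda>k. f k t) ` {1..N}"
      unfolding f_def by (rule order_stat_image[symmetric])
  qed
  finally have union: "(\<Union>j\<in>{1..N}. \<alpha> j) = (\<Union>j\<in>{1..N}. gamma i (f j))" .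
  show ?thesis
  proof (intro exI[of _ f] conjI allI impI ballI)
    show "lip1 (f j)" if "j \<in> {1..N}" for j
      by (rule closed[OF that]) (use g in \<open>auto intro: lip1_min lip1_max\<close>)
    show "f (j - 1) t \<le> f j t" if "1 < j \<and> j \<le> N" for j t
      using that unfolding f_def by (intro order_stat_mono) auto
    show "piecewise_linear (f j)"
      if "\<forall>j\<in>{1..N}. is_pl_curve i (\<alpha> j)" "j \<in> {1..N}" for j
      by (rule closed[OF that(2)]) (use pl_g that in \<open>auto intro: piecewise_linear_min piecewise_linear_max\<close>)
  qed (fact union)
qed

end
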